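(* Let $n\ge2$, $a\in\{-1,0,1\}$, $b,d\in\{1,-1\}$, $C,H\in\mathbb{R}$, and $f(v)=C-dv^2\big(a+b(H+v^{-n})^2\big)$ for $v>0$. Let $g:\mathbb{R}\to(0,\infty)$ be a non-constant smooth function with $(g')^2=f(g)$ and $g''=\tfrac12 f'(g)$ on $\mathbb{R}$. Then $g$ is of one of the types 1–5 defined in the context.
   Context: Types of a non-constant positive solution $g:\mathbb{R}\to(0,\infty)$: type 1 (periodic): $g$ is periodic with range $[v_1,v_2]$, $0<v_1<v_2$, and its maximum and minimum are each attained infinitely many times; type 2 (unbounded with no minimum): $g$ is injective with range $(v_1,\infty)$ for some $v_1>0$; type 3 (unbounded with a minimum): range $[v_1,\infty)$, $v_1$ attained exactly once and every other value of the range attained exactly twice; type 4 (bounded, not periodic, with a minimum): range $[v_1,v_2)$, $v_1$ attained exactly once, every other value exactly twice; type 5 (bounded, not periodic, with a maximum): range $(v_1,v_2]$, $v_2$ attained exactly once, every other value exactly twice. *)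

theory Defs
  imports "HOL-Analysis.Analysis"
begin

definition fpot :: "nat \<Rightarrow> real \<Rightarrow> real \<Rightarrow> real \<Rightarrow> real \<Rightarrow> real \<Rightarrow> real \<Rightarrow> real" where
  "fpot n a b d C H v = C - d * v^2 * (a + b * (H + inverse (v ^ n))^2)"

definition smooth_fun :: "(real \<Rightarrow> real) \<Rightarrow> bool" where
  "smooth_fun g \<longleftrightarrow> (\<exists>D :: nat \<Rightarrow> real \<Rightarrow> real. D 0 = g \<and>
      (\<forall>k x. (D k has_real_derivative D (Suc k) x) (at x)))"

definition type1 :: "(real \<Rightarrow> real) \<Rightarrow> bool" where
  "type1 g \<longleftrightarrow> (\<exists>T>0. \<forall>x. g (x + T) = g x) \<and>
     (\<exists>v1 v2. 0 < v1 \<and> v1 < v2 \<and> range g = {v1..v2} \<and>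
        infinite (g -` {v1}) \<and> infinite (g -` {v2}))"

definition type2 :: "(real \<Rightarrow> real) \<Rightarrow> bool" where
  "type2 g \<longleftrightarrow> inj g \<and> (\<exists>v1>0. range g = {v1<..})"

definition type3 :: "(real \<Rightarrow> real) \<Rightarrow> bool" where
  "type3 g \<longleftrightarrow> (\<exists>v1. range g = {v1..} \<and> card (g -` {v1}) = 1 \<and>
     (\<forall>y \<in> range g - {v1}. card (g -` {y}) = 2))"

definition type4 :: "(real \<Rightarrow> real) \<Rightarrow> bool" where
  "type4 g \<longleftrightarrow> \<not> (\<exists>T>0. \<forall>x. g (x + T) = g x) \<and>
     (\<exists>v1 v2. range g = {v1..<v2} \<and> card (g -` {v1}) = 1 \<and>
     (\<forall>y \<in> range g - {v1}. card (g -` {y}) = 2))"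

definition type5 :: "(real \<Rightarrow> real) \<Rightarrow> bool" where
  "type5 g \<longleftrightarrow> \<not> (\<exists>T>0. \<forall>x. g (x + T) = g x) \<and>
     (\<exists>v1 v2. range g = {v1<..v2} \<and> card (g -` {v2}) = 1 \<and>
     (\<forall>y \<in> range g - {v2}. card (g -` {y}) = 2))"

end

theory Submission
  imports Defs
begin

text \<open>Writing f = fpot, the hypotheses say that g moves in the potential -f with energy 0. The
  derivative f' is locally Lipschitz on (0,\<infinity>), so a solution is determined by the values of g and
  g' at one point; hence g is symmetric about every zero of g'. Two zeros of g' therefore make g
  periodic (type 1), and a single zero makes g symmetric and strictly monotone on both sides of it
  (types 3, 4, 5). If g' never vanishes, g is strictly monotone and every finite limit of g at
  \<plusminus>\<infinity> is a common zero of f and f'. As v^(2n-1) f'(v) is a quadratic in v^n with nonzero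
  constant term, f' has at most two positive zeros; a solution bounded at both ends would produce a
  third one by the mean value theorem, so g is unbounded (type 2).\<close>

lemma lipschitz_on_cball_if_C1:
  fixes f f' :: "real \<Rightarrow> real"
  assumes "open S" "v \<in> S"
    and deriv: "\<And>x. x \<in> S \<Longrightarrow> (f has_real_derivative f' x) (at x)" and "continuous_on S f'"
  obtains e L where "e > 0" "L-lipschitz_on (cball v e) f"
proof -
  obtain e where e: "e > 0" "cball v e \<subseteq> S"
    using assms(1,2) open_contains_cball by blast
  have "compact (f' ` cball v e)"
    by (intro compact_continuous_image continuous_on_subset[OF assms(4) e(2)]) simp
  then obtain B where B: "\<And>x. x \<in> cball v e \<Longrightarrow> norm (f' x) \<le> B"
    using compact_imp_bounded bounded_iff by (metis imageI)
  have "(max B 0)-lipschitz_on (cball v e) f"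
  proof (rule lipschitz_onI)
    fix x y assume "x \<in> cball v e" "y \<in> cball v e"
    moreover have "\<And>z. z \<in> cball v e \<Longrightarrow> (f has_field_derivative f' z) (at z within cball v e)"
      using e(2) by (blast intro: has_field_derivative_at_within deriv)
    moreover have "\<And>z. z \<in> cball v e \<Longrightarrow> norm (f' z) \<le> max B 0"
      using B by (meson max.coboundedI1)
    ultimately show "dist (f x) (f y) \<le> max B 0 * dist x y"
      unfolding dist_norm by (intro field_differentiable_bound[of "cball v e"]) auto
  qed simp
  with e(1) that show ?thesis by blast
qed

lemma gronwall_vanishing:
  fixes E E' :: "real \<Rightarrow> real"
  assumes "connected I" "x0 \<in> I" "x \<in> I"
    and deriv: "\<And>t. t \<in> I \<Longrightarrow> (E has_real_derivative E' t) (at t)"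
    and bound: "\<And>t. t \<in> I \<Longrightarrow> \<bar>E' t\<bar> \<le> K * E t"
    and nonneg: "\<And>t. t \<in> I \<Longrightarrow> E t \<ge> 0" and "E x0 = 0"
  shows "E x = 0"
proof -
  have "E x * exp (- K * x) \<le> E x0 * exp (- K * x0)" if "x0 \<le> x"
  proof (rule DERIV_nonpos_imp_nonincreasing[OF that])
    fix t assume "x0 \<le> t" "t \<le> x"
    then have t: "t \<in> I"
      using connected_contains_Icc[OF assms(1-3)] by auto
    have "((\<lambda>t. E t * exp (- K * t)) has_real_derivative (E' t - K * E t) * exp (- K * t)) (at t)"
      by (rule derivative_eq_intros deriv[OF t] refl)+ (simp add: algebra_simps)
    moreover have "(E' t - K * E t) * exp (- K * t) \<le> 0"
      using bound[OF t] by (simp add: mult_le_0_iff)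
    ultimately show "\<exists>y. ((\<lambda>t. E t * exp (- K * t)) has_real_derivative y) (at t) \<and> y \<le> 0"
      by blast
  qed
  moreover have "E x * exp (K * x) \<le> E x0 * exp (K * x0)" if "x \<le> x0"
  proof (rule DERIV_nonneg_imp_nondecreasing[OF that])
    fix t assume "x \<le> t" "t \<le> x0"
    then have t: "t \<in> I"
      using connected_contains_Icc[OF assms(1,3,2)] by auto
    have "((\<lambda>t. E t * exp (K * t)) has_real_derivative (E' t + K * E t) * exp (K * t)) (at t)"
      by (rule derivative_eq_intros deriv[OF t] refl)+ (simp add: algebra_simps)
    moreover have "(E' t + K * E t) * exp (K * t) \<ge> 0"
      using bound[OF t] by simp
    ultimately show "\<exists>y. ((\<lambda>t. E t * exp (K * t)) has_real_derivative y) (at t) \<and> y \<ge> 0"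
      by blast
  qed
  ultimately have "E x \<le> 0"
    using \<open>E x0 = 0\<close> by (cases "x0 \<le> x") (auto simp: mult_le_0_iff)
  with nonneg[OF assms(3)] show ?thesis
    by simp
qed

lemma abs_energy_derivative_le:
  fixes p q l L :: real
  assumes "\<bar>l\<bar> \<le> L * \<bar>p\<bar>" "0 \<le> L"
  shows "\<bar>2 * p * q + 2 * q * l\<bar> \<le> (1 + L) * (p^2 + q^2)"
proof -
  have "2 * \<bar>q\<bar> * \<bar>l\<bar> \<le> 2 * \<bar>q\<bar> * (L * \<bar>p\<bar>)"
    using assms(1) by (simp add: mult_left_mono)
  then have "\<bar>2 * p * q + 2 * q * l\<bar> \<le> 2 * \<bar>p\<bar> * \<bar>q\<bar> + 2 * \<bar>q\<bar> * (L * \<bar>p\<bar>)"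
    using abs_triangle_ineq[of "2 * p * q" "2 * q * l"] by (simp add: abs_mult)
  also have "\<dots> = (1 + L) * (2 * \<bar>p\<bar> * \<bar>q\<bar>)"
    by (simp add: algebra_simps)
  also have "\<dots> \<le> (1 + L) * (p^2 + q^2)"
    using sum_squares_bound[of "\<bar>p\<bar>" "\<bar>q\<bar>"] assms(2) by (intro mult_left_mono) auto
  finally show ?thesis .
qed

lemma autonomous_ode2_agree_near:
  fixes \<phi> y y' z z' :: "real \<Rightarrow> real"
  assumes lip: "\<And>v. v \<in> S \<Longrightarrow> \<exists>e>0. \<exists>L. L-lipschitz_on (cball v e) \<phi>"
    and y: "\<And>x. y x \<in> S" "\<And>x. (y has_real_derivative y' x) (at x)" "\<And>x. (y' has_real_derivative \<phi> (y x)) (at x)"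
    and z: "\<And>x. (z has_real_derivative z' x) (at x)" "\<And>x. (z' has_real_derivative \<phi> (z x)) (at x)"
    and "y x1 = z x1" "y' x1 = z' x1"
  obtains r where "r > 0" "\<And>x. x \<in> ball x1 r \<Longrightarrow> y x = z x \<and> y' x = z' x"
proof -
  obtain e L where e: "e > 0" and L: "L-lipschitz_on (cball (y x1) e) \<phi>"
    using lip[OF y(1)] by blast
  have "continuous_on UNIV y" "continuous_on UNIV z"
    using y(2) z(1) by (auto intro!: continuous_at_imp_continuous_on DERIV_isCont)
  then have "open (y -` ball (y x1) e \<inter> z -` ball (y x1) e)"
    by (intro open_Int open_vimage) auto
  moreover have "x1 \<in> y -` ball (y x1) e \<inter> z -` ball (y x1) e"
    using \<open>y x1 = z x1\<close> e by simp
  ultimately obtain r where r: "r > 0" "ball x1 r \<subseteq> y -` ball (y x1) e \<inter> z -` ball (y x1) e"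
    using open_contains_ball by blast
  define E where "E t = (y t - z t)^2 + (y' t - z' t)^2" for t
  define E' where "E' t = 2 * (y t - z t) * (y' t - z' t) + 2 * (y' t - z' t) * (\<phi> (y t) - \<phi> (z t))" for t
  have "E x = 0" if "x \<in> ball x1 r" for x
  proof (rule gronwall_vanishing[of "ball x1 r" x1 x E E' "1 + L"])
    fix t assume "t \<in> ball x1 r"
    show "(E has_real_derivative E' t) (at t)"
      unfolding E_def E'_def by (rule derivative_eq_intros y z refl)+ (simp add: algebra_simps)
    have "y t \<in> cball (y x1) e" "z t \<in> cball (y x1) e"
      using r(2) \<open>t \<in> ball x1 r\<close> by auto
    then have "\<bar>\<phi> (y t) - \<phi> (z t)\<bar> \<le> L * \<bar>y t - z t\<bar>"
      using lipschitz_onD[OF L] by (simp add: dist_real_def)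
    then show "\<bar>E' t\<bar> \<le> (1 + L) * E t"
      unfolding E_def E'_def by (rule abs_energy_derivative_le[OF _ lipschitz_on_nonneg[OF L]])
  qed (use r that \<open>y x1 = z x1\<close> \<open>y' x1 = z' x1\<close> in \<open>auto simp: E_def\<close>)
  then show ?thesis
    using that r(1) by (auto simp: E_def add_nonneg_eq_0_iff)
qed

lemma autonomous_ode2_unique:
  fixes \<phi> y y' z z' :: "real \<Rightarrow> real"
  assumes lip: "\<And>v. v \<in> S \<Longrightarrow> \<exists>e>0. \<exists>L. L-lipschitz_on (cball v e) \<phi>"
    and y: "\<And>x. y x \<in> S" "\<And>x. (y has_real_derivative y' x) (at x)" "\<And>x. (y' has_real_derivative \<phi> (y x)) (at x)"
    and z: "\<And>x. (z has_real_derivative z' x) (at x)" "\<And>x. (z' has_real_derivative \<phi> (z x)) (at x)"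
    and "y x0 = z x0" "y' x0 = z' x0"
  shows "y x = z x \<and> y' x = z' x"
proof -
  define A where "A = {x. y x = z x \<and> y' x = z' x}"
  have "continuous_on UNIV y" "continuous_on UNIV y'" "continuous_on UNIV z" "continuous_on UNIV z'"
    using y z by (auto intro!: continuous_at_imp_continuous_on DERIV_isCont)
  then have "closed A"
    unfolding A_def by (intro closed_Collect_conj closed_Collect_eq)
  moreover have "open A"
    unfolding open_contains_ball
  proof
    fix x1 assume "x1 \<in> A"
    obtain r where "r > 0" "\<And>x. x \<in> ball x1 r \<Longrightarrow> y x = z x \<and> y' x = z' x"
      using autonomous_ode2_agree_near[OF lip y z, of x1] \<open>x1 \<in> A\<close> by (auto simp: A_def)
    then show "\<exists>r>0. ball x1 r \<subseteq> A"
      by (auto simp: A_def)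
  qed
  ultimately have "A = UNIV"
    using connectedD[OF connected_UNIV \<open>open A\<close>, of "- A"] assms(7,8) by (auto simp: A_def)
  then show ?thesis
    by (auto simp: A_def)
qed

lemma autonomous_ode2_symmetric:
  fixes \<phi> y y' :: "real \<Rightarrow> real"
  assumes lip: "\<And>v. v \<in> S \<Longrightarrow> \<exists>e>0. \<exists>L. L-lipschitz_on (cball v e) \<phi>"
    and y: "\<And>x. y x \<in> S" "\<And>x. (y has_real_derivative y' x) (at x)" "\<And>x. (y' has_real_derivative \<phi> (y x)) (at x)"
    and "y' x0 = 0"
  shows "y (2 * x0 - x) = y x"
proof -
  have mirror: "((\<lambda>x. 2 * x0 - x) has_real_derivative -1) (at x)" for x
    by (rule derivative_eq_intros refl)+ simp
  have z: "((\<lambda>x. y (2 * x0 - x)) has_real_derivative - y' (2 * x0 - x)) (at x)"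
    "((\<lambda>x. - y' (2 * x0 - x)) has_real_derivative \<phi> (y (2 * x0 - x))) (at x)" for x
    using DERIV_chain2[OF y(2) mirror] DERIV_minus[OF DERIV_chain2[OF y(3) mirror]] by simp_all
  have "y x0 = y (2 * x0 - x0)" "y' x0 = - y' (2 * x0 - x0)"
    using \<open>y' x0 = 0\<close> by simp_all
  from autonomous_ode2_unique[OF lip y z this] have "y x = y (2 * x0 - x)"
    by blast
  then show ?thesis
    by simp
qed

lemma deriv_tendsto_zero_along_at_top:
  fixes g g' :: "real \<Rightarrow> real"
  assumes deriv: "\<And>x. (g has_real_derivative g' x) (at x)" and lim: "(g \<longlongrightarrow> L) at_top"
  obtains \<xi> :: "real \<Rightarrow> real" where "filterlim \<xi> at_top at_top" "((\<lambda>x. g' (\<xi> x)) \<longlongrightarrow> 0) at_top"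
proof -
  have "\<exists>z. x < z \<and> g (x + 1) - g x = g' z" for x
    using MVT2[of x "x + 1" g g'] deriv by force
  then obtain \<xi> where \<xi>: "\<And>x. x < \<xi> x" "\<And>x. g (x + 1) - g x = g' (\<xi> x)"
    by metis
  have "filterlim (\<lambda>x::real. x + 1) at_top at_top"
    by (rule filterlim_at_top_mono[OF filterlim_ident]) auto
  then have "((\<lambda>x. g (x + 1) - g x) \<longlongrightarrow> L - L) at_top"
    by (intro tendsto_intros lim filterlim_compose[OF lim])
  then have "((\<lambda>x. g' (\<xi> x)) \<longlongrightarrow> 0) at_top"
    by (simp add: \<xi>(2))
  moreover have "filterlim \<xi> at_top at_top"
    by (rule filterlim_at_top_mono[OF filterlim_ident]) (auto simp: less_imp_le \<xi>(1))
  ultimately show ?thesis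
    using that by blast
qed

lemma mono_tendsto_Sup_at_top:
  fixes g :: "real \<Rightarrow> real"
  assumes "mono g" "bdd_above (range g)"
  shows "(g \<longlongrightarrow> Sup (range g)) at_top"
proof (rule order_tendstoI)
  fix y assume "y < Sup (range g)"
  then obtain x0 where "y < g x0"
    using less_cSup_iff[of "range g" y] assms(2) by auto
  then have "\<forall>x\<ge>x0. y < g x"
    using monoD[OF assms(1)] by (meson less_le_trans)
  then show "eventually (\<lambda>x. y < g x) at_top"
    unfolding eventually_at_top_linorder by blast
next
  fix y assume "Sup (range g) < y"
  then have "g x < y" for x
    using cSup_upper[of "g x" "range g"] assms(2) by simp
  then show "eventually (\<lambda>x. g x < y) at_top"
    by simp
qed

lemma mono_tendsto_Inf_at_bot:
  fixes g :: "real \<Rightarrow> real"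
  assumes "mono g" "bdd_below (range g)"
  shows "(g \<longlongrightarrow> Inf (range g)) at_bot"
proof (rule order_tendstoI)
  fix y assume "y < Inf (range g)"
  then have "y < g x" for x
    using cInf_lower[of "g x" "range g"] assms(2) by simp
  then show "eventually (\<lambda>x. y < g x) at_bot"
    by simp
next
  fix y assume "Inf (range g) < y"
  then obtain x0 where "g x0 < y"
    using cInf_less_iff[of "range g" y] assms(2) by auto
  then have "\<forall>x\<le>x0. g x < y"
    using monoD[OF assms(1)] by (meson le_less_trans)
  then show "eventually (\<lambda>x. g x < y) at_bot"
    unfolding eventually_at_bot_linorder by blast
qed

lemma continuous_on_nonzero_sign:
  fixes f :: "'a::topological_space \<Rightarrow> real"
  assumes "connected S" "continuous_on S f" "\<And>x. x \<in> S \<Longrightarrow> f x \<noteq> 0"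
  shows "(\<forall>x\<in>S. f x > 0) \<or> (\<forall>x\<in>S. f x < 0)"
proof (rule ccontr)
  assume "\<not> ?thesis"
  then obtain p q where pq: "p \<in> S" "q \<in> S" "\<not> f p > 0" "\<not> f q < 0"
    by blast
  have "{f p..f q} \<subseteq> f ` S"
    by (rule connected_contains_Icc[OF connected_continuous_image[OF assms(2,1)]]) (use pq in auto)
  moreover have "f p < 0" "0 < f q"
    using pq assms(3) by (simp_all add: order.strict_iff_order)
  ultimately have "0 \<in> f ` S"
    by auto
  with assms(3) show False
    by auto
qed

lemma strict_mono_on_atLeast_if_deriv_pos:
  fixes f f' :: "real \<Rightarrow> real"
  assumes deriv: "\<And>x. (f has_real_derivative f' x) (at x)" and pos: "\<And>x. m < x \<Longrightarrow> f' x > 0"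
  shows "strict_mono_on {m..} f"
proof (rule strict_mono_onI)
  fix s t assume "s \<in> {m..}" "t \<in> {m..}" "s < t"
  have "\<exists>y. (f has_real_derivative y) (at x) \<and> y > 0" if "s < x" "x < t" for x
    using deriv[of x] pos[of x] that \<open>s \<in> {m..}\<close> by auto
  moreover have "continuous_on {s..t} f"
    using deriv by (auto intro!: continuous_at_imp_continuous_on DERIV_isCont)
  ultimately show "f s < f t"
    by (rule DERIV_pos_imp_increasing_open[OF \<open>s < t\<close>])
qed

lemma range_strict_mono_unbounded:
  fixes g :: "real \<Rightarrow> real"
  assumes cont: "continuous_on UNIV g" and smono: "strict_mono g"
    and bdd_below: "bdd_below (range g)" and unbounded: "\<not> bdd_above (range g)"
  shows "range g = {Inf (range g)<..}"
proof
  show "range g \<subseteq> {Inf (range g)<..}"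
  proof
    fix y assume "y \<in> range g"
    then obtain x where "y = g x"
      by blast
    moreover have "Inf (range g) \<le> g (x - 1)" "g (x - 1) < g x"
      using bdd_below smono by (simp_all add: cInf_lower strict_mono_less)
    ultimately show "y \<in> {Inf (range g)<..}"
      by simp
  qed
  show "{Inf (range g)<..} \<subseteq> range g"
  proof
    fix y assume "y \<in> {Inf (range g)<..}"
    then obtain x1 where x1: "g x1 < y"
      using cInf_less_iff[OF _ bdd_below] by auto
    obtain x2 where x2: "y < g x2"
      using unbounded by (auto simp: bdd_above_def not_le)
    have "x1 \<le> x2"
    proof (rule ccontr)
      assume "\<not> x1 \<le> x2"
      then have "g x2 < g x1"
        using smono by (simp add: strict_mono_less)
      with x1 x2 show False
        by simp
    qed
    moreover have "isCont g x" for x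
      using cont by (simp add: continuous_on_eq_continuous_at)
    ultimately obtain x where "g x = y"
      using IVT[of g x1 y x2] x1 x2 by auto
    then show "y \<in> range g"
      by blast
  qed
qed

lemma periodic_int_multiple:
  fixes g :: "real \<Rightarrow> 'a"
  assumes per: "\<And>x. g (x + T) = g x"
  shows "g (x + of_int k * T) = g x"
proof -
  have nat_multiple: "g (x + real k * T) = g x" for k :: nat and x
  proof (induction k)
    case (Suc k)
    have "x + real (Suc k) * T = (x + real k * T) + T"
      by (simp add: algebra_simps)
    then show ?case
      using per[of "x + real k * T"] Suc.IH by (simp only:)
  qed simp
  show ?thesis
    using nat_multiple[of x "nat k"] nat_multiple[of "x + of_int k * T" "nat (- k)"]
    by (cases "k \<ge> 0") simp_all
qed

lemma range_periodic:
  fixes g :: "real \<Rightarrow> 'a"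
  assumes "T > 0" and per: "\<And>x. g (x + T) = g x"
  shows "range g = g ` {0..T}"
proof -
  have "g x \<in> g ` {0..T}" for x
  proof -
    define k where "k = \<lfloor>x / T\<rfloor>"
    have "x - of_int k * T \<in> {0..T}"
      using \<open>T > 0\<close> floor_divide_lower[of T x] floor_divide_upper[of T x]
      by (auto simp: k_def algebra_simps)
    moreover have "g x = g (x - of_int k * T)"
      using periodic_int_multiple[where g = g, OF per, of "x - of_int k * T" k] by simp
    ultimately show ?thesis
      by blast
  qed
  then show ?thesis
    by blast
qed

lemma type1_if_periodic:
  fixes g :: "real \<Rightarrow> real"
  assumes cont: "continuous_on UNIV g" and "T > 0" and per: "\<And>x. g (x + T) = g x"
    and pos: "\<And>x. g x > 0" and nonconst: "\<not> (\<exists>c. \<forall>x. g x = c)"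
  shows "type1 g"
proof -
  obtain v1 v2 where range: "range g = {v1..v2}" and "v1 \<le> v2"
    using continuous_image_closed_interval[of 0 T g] cont \<open>T > 0\<close>
    by (auto simp: range_periodic[where g = g, OF \<open>T > 0\<close> per] intro: continuous_on_subset)
  moreover have "v1 \<noteq> v2"
    using range nonconst by (metis atLeastAtMost_singleton rangeI singletonD)
  moreover have "infinite (g -` {v})" if "v \<in> range g" for v
  proof -
    obtain x where "g x = v"
      using \<open>v \<in> range g\<close> by blast
    have "inj (\<lambda>k::int. x + of_int k * T)"
      using \<open>T > 0\<close> by (auto simp: inj_def)
    then have "infinite (range (\<lambda>k::int. x + of_int k * T))"
      using finite_imageD infinite_UNIV_int by blast
    moreover have "range (\<lambda>k::int. x + of_int k * T) \<subseteq> g -` {v}"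
      using periodic_int_multiple[where g = g, OF per] \<open>g x = v\<close> by auto
    ultimately show ?thesis
      using infinite_super by blast
  qed
  moreover have "v1 > 0"
    using pos range by (metis atLeastAtMost_iff order.refl rangeE \<open>v1 \<le> v2\<close>)
  ultimately show ?thesis
    unfolding type1_def using \<open>T > 0\<close> per by auto
qed

lemma range_eq_image_atLeast_if_symmetric:
  fixes g :: "real \<Rightarrow> 'a"
  assumes sym: "\<And>x. g (2 * m - x) = g x"
  shows "range g = g ` {m..}"
proof -
  have "g x \<in> g ` {m..}" for x
    using sym[of x] by (cases "m \<le> x") (auto intro!: image_eqI[of _ _ "2 * m - x"])
  then show ?thesis
    by blast
qed

lemma preimages_if_symmetric_inj_on:
  fixes g :: "real \<Rightarrow> 'a"
  assumes sym: "\<And>x. g (2 * m - x) = g x" and inj: "inj_on g {m..}"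
  shows "g -` {g m} = {m}" and "\<And>y. y \<in> range g - {g m} \<Longrightarrow> card (g -` {y}) = 2"
proof -
  define r where "r x = m + \<bar>x - m\<bar>" for x
  have r: "r x \<in> {m..}" "g (r x) = g x" for x
    using sym[of x] by (auto simp: r_def abs_if)
  have preimage: "g -` {g t} = {t, 2 * m - t}" if "t \<ge> m" for t
  proof
    show "g -` {g t} \<subseteq> {t, 2 * m - t}"
    proof
      fix s assume "s \<in> g -` {g t}"
      then have "r s = t"
        using inj_onD[OF inj, of "r s" t] r[of s] that by simp
      then show "s \<in> {t, 2 * m - t}"
        by (auto simp: r_def abs_if)
    qed
  qed (use sym in auto)
  show "g -` {g m} = {m}"
    using preimage[of m] by simp
  fix y assume "y \<in> range g - {g m}"
  then obtain x where "y = g x" "x \<noteq> m"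
    by auto
  then have "y = g (r x)" "r x \<noteq> m"
    using r(2) by (auto simp: r_def)
  moreover have "r x \<noteq> 2 * m - r x"
    using \<open>r x \<noteq> m\<close> by simp
  ultimately show "card (g -` {y}) = 2"
    using preimage[of "r x"] r(1) by simp
qed

lemma not_periodic_if_preimage_singleton:
  fixes g :: "real \<Rightarrow> 'a"
  assumes "g -` {y} = {m}"
  shows "\<not> (\<exists>T>0. \<forall>x. g (x + T) = g x)"
proof
  assume "\<exists>T>0. \<forall>x. g (x + T) = g x"
  then obtain T where "T > 0" "g (m + T) = g m"
    by blast
  moreover have "g m = y"
    using assms by blast
  ultimately have "m + T \<in> g -` {y}"
    by simp
  with assms \<open>T > 0\<close> show False
    by simp
qed

lemma range_continuous_min_no_max:
  fixes g :: "real \<Rightarrow> real"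
  assumes cont: "continuous_on UNIV g" and min: "\<And>x. g m \<le> g x" and no_max: "\<And>x. \<exists>t. g x < g t"
  shows "bdd_above (range g) \<Longrightarrow> range g = {g m..<Sup (range g)}"
    and "\<not> bdd_above (range g) \<Longrightarrow> range g = {g m..}"
proof -
  have between: "y \<in> range g" if "g m \<le> y" "y < x" "x \<in> range g" for x y
    using connected_contains_Icc[OF connected_continuous_image[OF cont connected_UNIV], of "g m" x] that
    by auto
  show "range g = {g m..<Sup (range g)}" if bdd: "bdd_above (range g)"
  proof
    show "range g \<subseteq> {g m..<Sup (range g)}"
    proof
      fix y assume "y \<in> range g"
      then obtain x t where "y = g x" "g x < g t"
        using no_max by blast
      moreover have "g t \<le> Sup (range g)"
        using cSup_upper[OF _ bdd] by simp
      ultimately show "y \<in> {g m..<Sup (range g)}"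
        using min by auto
    qed
    show "{g m..<Sup (range g)} \<subseteq> range g"
    proof
      fix y assume "y \<in> {g m..<Sup (range g)}"
      moreover obtain x where "x \<in> range g" "y < x"
        using calculation less_cSup_iff[OF _ bdd] by auto
      ultimately show "y \<in> range g"
        using between by auto
    qed
  qed
  show "range g = {g m..}" if unbdd: "\<not> bdd_above (range g)"
  proof
    show "{g m..} \<subseteq> range g"
    proof
      fix y assume "y \<in> {g m..}"
      moreover obtain x where "x \<in> range g" "y < x"
        using unbdd unfolding bdd_above_def by (meson not_le)
      ultimately show "y \<in> range g"
        using between by auto
    qed
  qed (use min in auto)
qed

lemma type3_or_type4_if_symmetric_strict_mono:
  fixes g :: "real \<Rightarrow> real"
  assumes cont: "continuous_on UNIV g" and sym: "\<And>x. g (2 * m - x) = g x"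
    and mono: "strict_mono_on {m..} g"
  shows "type3 g \<or> type4 g"
proof -
  note preimages = preimages_if_symmetric_inj_on[OF sym strict_mono_on_imp_inj_on[OF mono]]
  have range: "range g = g ` {m..}"
    by (rule range_eq_image_atLeast_if_symmetric[where g = g, OF sym])
  have min: "g m \<le> g x" and no_max: "\<exists>t. g x < g t" for x
  proof -
    obtain t where "t \<ge> m" "g x = g t"
      using range by (metis atLeast_iff imageE rangeI)
    then show "g m \<le> g x" "\<exists>t. g x < g t"
      using strict_mono_onD[OF mono, of m t] strict_mono_onD[OF mono, of t "t + 1"]
      by (cases "t = m", auto)
  qed
  note range_cases = range_continuous_min_no_max[OF cont min no_max]
  have card1: "card (g -` {g m}) = 1"
    using preimages(1) by simp
  show ?thesis
  proof (cases "bdd_above (range g)")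
    case True
    then have "range g = {g m..<Sup (range g)}"
      by (rule range_cases(1))
    then show ?thesis
      unfolding type4_def using card1 preimages(2) not_periodic_if_preimage_singleton[OF preimages(1)]
      by blast
  next
    case False
    then have "range g = {g m..}"
      by (rule range_cases(2))
    then show ?thesis
      unfolding type3_def using card1 preimages(2) by blast
  qed
qed

lemma type5_if_type4_uminus:
  fixes g :: "real \<Rightarrow> real"
  assumes "type4 (\<lambda>x. - g x)"
  shows "type5 g"
proof -
  obtain v1 v2 where range: "range (\<lambda>x. - g x) = {v1..<v2}"
    and card: "card ((\<lambda>x. - g x) -` {v1}) = 1" "\<forall>y \<in> range (\<lambda>x. - g x) - {v1}. card ((\<lambda>x. - g x) -` {y}) = 2"
    and not_periodic: "\<not> (\<exists>T>0. \<forall>x. - g (x + T) = - g x)"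
    using assms unfolding type4_def by blast
  have preimage: "(\<lambda>x. - g x) -` {y} = g -` {- y}" for y
    by auto
  have "range g = uminus ` range (\<lambda>x. - g x)"
    by (simp add: image_image)
  then have "range g = {- v2<..- v1}"
    unfolding range by (simp add: image_uminus_atLeastLessThan)
  moreover have "\<forall>y \<in> range g - {- v1}. card (g -` {y}) = 2"
  proof
    fix y assume "y \<in> range g - {- v1}"
    then have "- y \<in> range (\<lambda>x. - g x) - {v1}"
      by auto
    then have "card ((\<lambda>x. - g x) -` {- y}) = 2"
      using card(2) by blast
    then show "card (g -` {y}) = 2"
      unfolding preimage by simp
  qed
  ultimately show ?thesis
    unfolding type5_def using card(1) not_periodic by (auto simp: preimage)
qed

lemma type2_if_type2_mirror:
  fixes g :: "real \<Rightarrow> real"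
  assumes "type2 (\<lambda>x. g (- x))"
  shows "type2 g"
proof -
  have "range (\<lambda>x. g (- x)) = range g"
  proof
    show "range g \<subseteq> range (\<lambda>x. g (- x))"
      by (metis (no_types) image_subsetI minus_minus rangeI)
  qed auto
  moreover have "inj g"
    using assms unfolding type2_def by (metis (mono_tags, lifting) inj_def minus_minus)
  ultimately show ?thesis
    using assms unfolding type2_def by simp
qed

definition dfpot :: "nat \<Rightarrow> real \<Rightarrow> real \<Rightarrow> real \<Rightarrow> real \<Rightarrow> real \<Rightarrow> real" where
  "dfpot n a b d H v = - 2 * d * (a + b * H^2) * v + 2 * d * b * H * (real n - 2) * v powi (1 - int n)
     + 2 * d * b * (real n - 1) * v powi (1 - 2 * int n)"

lemma fpot_powi:
  assumes "v \<noteq> 0"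
  shows "fpot n a b d C H v =
    C - d * (a + b * H^2) * v^2 - 2 * d * b * H * v powi (2 - int n) - d * b * v powi (2 - 2 * int n)"
proof -
  have "v^2 * inverse (v ^ n) = v powi (2 - int n)" "v^2 * inverse (v ^ n)^2 = v powi (2 - 2 * int n)"
    using assms by (simp_all add: power_int_diff power_int_minus power_int_mult divide_inverse
        mult.commute[of n 2] flip: power_inverse power_mult power_mult_distrib)
  then show ?thesis
    unfolding fpot_def by (simp add: power2_sum algebra_simps)
qed

lemma has_real_derivative_fpot:
  assumes "v \<noteq> 0"
  shows "(fpot n a b d C H has_real_derivative dfpot n a b d H v) (at v)"
proof -
  have "((\<lambda>v. C - d * (a + b * H^2) * v^2 - 2 * d * b * H * v powi (2 - int n) - d * b * v powi (2 - 2 * int n))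
      has_real_derivative dfpot n a b d H v) (at v)"
    unfolding dfpot_def using assms
    by (auto intro!: derivative_eq_intros simp: algebra_simps)
  then show ?thesis
    by (rule has_field_derivative_transform_within_open[where S = "- {0}"]) (use assms fpot_powi in auto)
qed

lemma fpot_scaled:
  assumes "n \<ge> 1" "v \<noteq> 0"
  shows "v ^ (2 * n - 2) * fpot n a b d C H v =
    C * v ^ (2 * n - 2) - d * (a + b * H^2) * v ^ (2 * n) - 2 * d * b * H * v ^ n - d * b"
proof -
  have scale: "v ^ (2 * n - 2) * v powi k = v powi (2 * int n - 2 + k)" for k
    using assms by (simp add: power_int_add of_nat_diff flip: power_int_of_nat)
  have e1: "v ^ (2 * n - 2) * v powi (2 - int n) = v ^ n"
    and e2: "v ^ (2 * n - 2) * v powi (2 - 2 * int n) = 1"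
    by (simp_all add: scale)
  have "2 * n - 2 + 2 = 2 * n"
    using assms(1) by simp
  then have e3: "v ^ (2 * n - 2) * v^2 = v ^ (2 * n)"
    by (metis power_add)
  have "v ^ (2 * n - 2) * fpot n a b d C H v = C * v ^ (2 * n - 2) - d * (a + b * H^2) * (v ^ (2 * n - 2) * v^2)
      - 2 * d * b * H * (v ^ (2 * n - 2) * v powi (2 - int n)) - d * b * (v ^ (2 * n - 2) * v powi (2 - 2 * int n))"
    using assms(2) unfolding fpot_powi[OF assms(2)] by (simp only: algebra_simps)
  then show ?thesis
    unfolding e1 e2 e3 by simp
qed

lemma dfpot_scaled:
  assumes "v \<noteq> 0"
  shows "v powi (2 * int n - 1) * dfpot n a b d H v =
    - 2 * d * (a + b * H^2) * (v ^ n)^2 + 2 * d * b * H * (real n - 2) * v ^ n + 2 * d * b * (real n - 1)"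
proof -
  have scale: "v powi (2 * int n - 1) * v powi k = v powi (2 * int n - 1 + k)" for k
    using assms by (simp add: power_int_add)
  have "v powi (2 * int n) = (v ^ n)^2"
    by (metis of_nat_mult of_nat_numeral power_int_of_nat power_mult mult.commute)
  then have e1: "v powi (2 * int n - 1) * v = (v ^ n)^2"
    using assms by (simp add: power_int_minus_mult)
  have e2: "v powi (2 * int n - 1) * v powi (1 - int n) = v ^ n"
    and e3: "v powi (2 * int n - 1) * v powi (1 - 2 * int n) = 1"
    by (simp_all add: scale)
  have "v powi (2 * int n - 1) * dfpot n a b d H v = - 2 * d * (a + b * H^2) * (v powi (2 * int n - 1) * v)
      + 2 * d * b * H * (real n - 2) * (v powi (2 * int n - 1) * v powi (1 - int n))
      + 2 * d * b * (real n - 1) * (v powi (2 * int n - 1) * v powi (1 - 2 * int n))"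
    unfolding dfpot_def by (simp only: algebra_simps)
  then show ?thesis
    unfolding e1 e2 e3 by simp
qed

lemma quadratic_three_roots:
  fixes A B c p q r :: real
  assumes "A * p^2 + B * p + c = 0" "A * q^2 + B * q + c = 0" "A * r^2 + B * r + c = 0"
    and "p \<noteq> q" "p \<noteq> r" "q \<noteq> r"
  shows "A = 0 \<and> B = 0 \<and> c = 0"
proof -
  have "(p - q) * (A * (p + q) + B) = 0" "(p - r) * (A * (p + r) + B) = 0"
    using assms(1-3) by (simp_all add: algebra_simps power2_eq_square)
  then have "A * (p + q) + B = 0" "A * (p + r) + B = 0"
    using assms(4,5) by simp_all
  moreover have "A * (q - r) = (A * (p + q) + B) - (A * (p + r) + B)"
    by (simp add: algebra_simps)
  ultimately have "A * (q - r) = 0"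
    by simp
  then show ?thesis
    using assms \<open>A * (p + q) + B = 0\<close> by simp
qed

lemma dfpot_no_three_positive_zeros:
  assumes "n \<ge> 2" "b \<noteq> 0" "d \<noteq> 0" "0 < u" "u < v" "v < w"
    and "dfpot n a b d H u = 0" "dfpot n a b d H v = 0" "dfpot n a b d H w = 0"
  shows False
proof -
  let ?A = "- 2 * d * (a + b * H^2)" and ?B = "2 * d * b * H * (real n - 2)" and ?c = "2 * d * b * (real n - 1)"
  have root: "?A * (x ^ n)^2 + ?B * x ^ n + ?c = 0" if "x > 0" "dfpot n a b d H x = 0" for x
    using dfpot_scaled[of x n a b d H] that by simp
  have "u ^ n < v ^ n" "v ^ n < w ^ n"
    using assms(1,4-6) by (auto intro: power_strict_mono)
  then have "?c = 0"
    using quadratic_three_roots[OF root[of u] root[of v] root[of w]] assms(4-9) by fastforce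
  with assms(1-3) show False by simp
qed

lemma fpot_double_zero_unique:
  assumes "n \<ge> 2" "b \<noteq> 0" "d \<noteq> 0" "0 < u" "0 < v"
    and "fpot n a b d C H u = 0" "dfpot n a b d H u = 0"
    and "fpot n a b d C H v = 0" "dfpot n a b d H v = 0"
  shows "u = v"
proof -
  have no_pair: "\<not> p < q" if "0 < p" "fpot n a b d C H p = 0" "dfpot n a b d H p = 0"
    "fpot n a b d C H q = 0" "dfpot n a b d H q = 0" for p q
  proof
    assume "p < q"
    then obtain z where "p < z" "z < q" "fpot n a b d C H q - fpot n a b d C H p = (q - p) * dfpot n a b d H z"
      using MVT2[of p q "fpot n a b d C H" "dfpot n a b d H"] has_real_derivative_fpot \<open>0 < p\<close> by force
    moreover have "dfpot n a b d H z = 0"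
      using calculation that by simp
    ultimately show False
      using dfpot_no_three_positive_zeros[OF assms(1-3) \<open>0 < p\<close>] that by blast
  qed
  show ?thesis
    using no_pair[of u v] no_pair[of v u] assms(4-9) by linarith
qed

lemma dfpot_locally_lipschitz:
  assumes "v > 0"
  shows "\<exists>e>0. \<exists>L. L-lipschitz_on (cball v e) (\<lambda>v. dfpot n a b d H v / 2)"
proof -
  define f' where "f' v = - d * (a + b * H^2) + d * b * H * (real n - 2) * (1 - real n) * v powi (- int n)
      + d * b * (real n - 1) * (1 - 2 * real n) * v powi (- 2 * int n)" for v
  have "((\<lambda>v. dfpot n a b d H v / 2) has_real_derivative f' v) (at v)" if "v \<in> {0<..}" for v
    unfolding dfpot_def using that
    by (intro derivative_eq_intros refl) (simp_all add: f'_def, simp add: algebra_simps)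
  moreover have "continuous_on {0<..} f'"
    unfolding f'_def by (intro continuous_intros) auto
  ultimately show ?thesis
    using lipschitz_on_cball_if_C1[of "{0<..}" v] assms by (metis greaterThan_iff open_greaterThan)
qed

locale fpot_solution =
  fixes n :: nat and a b d C H :: real and g g' :: "real \<Rightarrow> real"
  assumes n_ge_2: "n \<ge> 2" and b_nonzero: "b \<noteq> 0" and d_nonzero: "d \<noteq> 0"
    and pos: "\<And>x. g x > 0"
    and deriv: "\<And>x. (g has_real_derivative g' x) (at x)"
    and deriv2: "\<And>x. (g' has_real_derivative dfpot n a b d H (g x) / 2) (at x)"
    and energy: "\<And>x. (g' x)^2 = fpot n a b d C H (g x)"
begin

lemma mirror: "fpot_solution n a b d C H (\<lambda>x. g (c - x)) (\<lambda>x. - g' (c - x))"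
proof
  have mirror: "((\<lambda>x. c - x) has_real_derivative -1) (at x)" for x
    by (rule derivative_eq_intros refl)+ simp
  show "((\<lambda>x. g (c - x)) has_real_derivative - g' (c - x)) (at x)" for x
    using DERIV_chain2[OF deriv mirror] by simp
  show "((\<lambda>x. - g' (c - x)) has_real_derivative dfpot n a b d H (g (c - x)) / 2) (at x)" for x
    using DERIV_minus[OF DERIV_chain2[OF deriv2 mirror]] by simp
qed (use n_ge_2 b_nonzero d_nonzero pos energy in auto)

lemma symmetric_about_critical_point:
  assumes "g' x0 = 0"
  shows "g (2 * x0 - x) = g x"
proof (rule autonomous_ode2_symmetric[where S = "{0<..}" and y' = g'])
  show "\<exists>e>0. \<exists>L. L-lipschitz_on (cball v e) (\<lambda>v. dfpot n a b d H v / 2)" if "v \<in> {0<..}" for v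
    using dfpot_locally_lipschitz that by simp
qed (use pos deriv deriv2 assms in auto)

lemma continuous_on_g: "continuous_on UNIV g"
  using deriv by (auto intro!: continuous_at_imp_continuous_on DERIV_isCont)

lemma tendsto_at_top_pos:
  assumes lim: "(g \<longlongrightarrow> L) at_top"
  shows "L > 0"
proof -
  obtain \<xi> :: "real \<Rightarrow> real" where \<xi>: "filterlim \<xi> at_top at_top" "((\<lambda>x. g' (\<xi> x)) \<longlongrightarrow> 0) at_top"
    using deriv_tendsto_zero_along_at_top[OF deriv lim] by blast
  have "L \<ge> 0"
    by (intro tendsto_lowerbound[OF lim] always_eventually) (simp_all add: less_imp_le pos)
  moreover have "L \<noteq> 0"
  proof
    assume "L = 0"
    txt \<open>P v = v^(2n-2) fpot v tends to -d b \<noteq> 0 as v \<rightarrow> 0, while g^(2n-2) (g')^2 tends to 0 along \<xi>.\<close>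
    define P where "P v = C * v ^ (2 * n - 2) - d * (a + b * H^2) * v ^ (2 * n) - 2 * d * b * H * v ^ n - d * b" for v
    have g\<xi>: "((\<lambda>x. g (\<xi> x)) \<longlongrightarrow> 0) at_top"
      using filterlim_compose[OF lim \<xi>(1)] \<open>L = 0\<close> by simp
    then have "((\<lambda>x. P (g (\<xi> x))) \<longlongrightarrow> P 0) at_top"
      unfolding P_def by (intro tendsto_intros)
    moreover have "P (g (\<xi> x)) = g (\<xi> x) ^ (2 * n - 2) * g' (\<xi> x) ^ 2" for x
      using fpot_scaled[of n "g (\<xi> x)"] n_ge_2 pos[of "\<xi> x"] energy[of "\<xi> x"] by (simp add: P_def)
    moreover have "((\<lambda>x. g (\<xi> x) ^ (2 * n - 2) * g' (\<xi> x) ^ 2) \<longlongrightarrow> 0 ^ (2 * n - 2) * 0 ^ 2) at_top"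
      by (intro tendsto_intros g\<xi> \<xi>(2))
    ultimately have "P 0 = 0"
      using tendsto_unique[OF trivial_limit_at_top_linorder] by force
    then show False
      using n_ge_2 b_nonzero d_nonzero by (simp add: P_def power_0_left)
  qed
  ultimately show "L > 0"
    by simp
qed

lemma tendsto_at_top_equilibrium:
  assumes lim: "(g \<longlongrightarrow> L) at_top"
  shows "fpot n a b d C H L = 0" "dfpot n a b d H L = 0"
proof -
  obtain \<xi> :: "real \<Rightarrow> real" where \<xi>: "filterlim \<xi> at_top at_top" "((\<lambda>x. g' (\<xi> x)) \<longlongrightarrow> 0) at_top"
    using deriv_tendsto_zero_along_at_top[OF deriv lim] by blast
  have "L > 0"
    using lim by (rule tendsto_at_top_pos)
  then have fpot_cont: "isCont (fpot n a b d C H) L"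
    by (intro DERIV_isCont[OF has_real_derivative_fpot]) simp
  have "((\<lambda>x. fpot n a b d C H (g (\<xi> x))) \<longlongrightarrow> fpot n a b d C H L) at_top"
    by (rule isCont_tendsto_compose[OF fpot_cont filterlim_compose[OF lim \<xi>(1)]])
  moreover have "((\<lambda>x. fpot n a b d C H (g (\<xi> x))) \<longlongrightarrow> 0) at_top"
    using tendsto_power[OF \<xi>(2), of 2] by (simp add: energy[symmetric])
  ultimately show fpot_L: "fpot n a b d C H L = 0"
    using tendsto_unique[OF trivial_limit_at_top_linorder] by blast
  have "((\<lambda>x. fpot n a b d C H (g x)) \<longlongrightarrow> 0) at_top"
    using isCont_tendsto_compose[OF fpot_cont lim] fpot_L by simp
  then have "((\<lambda>x. (g' x)^2) \<longlongrightarrow> 0) at_top"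
    by (simp add: energy)
  then have "((\<lambda>x. \<bar>g' x\<bar>) \<longlongrightarrow> 0) at_top"
    using tendsto_real_sqrt by fastforce
  then have g'_lim: "(g' \<longlongrightarrow> 0) at_top"
    by (rule tendsto_rabs_zero_cancel)
  obtain \<eta> :: "real \<Rightarrow> real" where \<eta>: "filterlim \<eta> at_top at_top"
      "((\<lambda>x. dfpot n a b d H (g (\<eta> x)) / 2) \<longlongrightarrow> 0) at_top"
    using deriv_tendsto_zero_along_at_top[OF deriv2 g'_lim] by blast
  moreover have "((\<lambda>x. dfpot n a b d H (g (\<eta> x)) / 2) \<longlongrightarrow> dfpot n a b d H L / 2) at_top"
    unfolding dfpot_def using \<open>L > 0\<close>
    by (intro tendsto_intros filterlim_compose[OF lim \<eta>(1)]) auto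
  ultimately show "dfpot n a b d H L = 0"
    using tendsto_unique[OF trivial_limit_at_top_linorder] by fastforce
qed

lemma type2_if_deriv_pos:
  assumes deriv_pos: "\<And>x. g' x > 0"
  shows "type2 g"
proof -
  have "g s < g t" if "s < t" for s t
    using deriv deriv_pos by (intro DERIV_pos_imp_increasing[OF that]) blast
  then have smono: "strict_mono g"
    by (rule strict_monoI)
  have bdd_below: "bdd_below (range g)"
    using pos less_imp_le by (auto simp: bdd_below_def)
  define \<alpha> where "\<alpha> = Inf (range g)"
  have "(g \<longlongrightarrow> \<alpha>) at_bot"
    unfolding \<alpha>_def by (rule mono_tendsto_Inf_at_bot[OF strict_mono_mono[OF smono] bdd_below])
  then have "((\<lambda>x. g (0 - x)) \<longlongrightarrow> \<alpha>) at_top"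
    by (simp add: filterlim_at_bot_mirror)
  then have \<alpha>: "\<alpha> > 0" "fpot n a b d C H \<alpha> = 0" "dfpot n a b d H \<alpha> = 0"
    using fpot_solution.tendsto_at_top_pos[OF mirror] fpot_solution.tendsto_at_top_equilibrium[OF mirror]
    by blast+
  have "\<not> bdd_above (range g)"
  proof
    assume bdd_above: "bdd_above (range g)"
    define \<beta> where "\<beta> = Sup (range g)"
    have "(g \<longlongrightarrow> \<beta>) at_top"
      unfolding \<beta>_def by (rule mono_tendsto_Sup_at_top[OF strict_mono_mono[OF smono] bdd_above])
    then have \<beta>: "\<beta> > 0" "fpot n a b d C H \<beta> = 0" "dfpot n a b d H \<beta> = 0"
      by (simp_all add: tendsto_at_top_pos tendsto_at_top_equilibrium)
    have "\<alpha> \<le> g 0" "g 0 < g 1" "g 1 \<le> \<beta>"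
      using bdd_below bdd_above smono by (auto simp: \<alpha>_def \<beta>_def cInf_lower cSup_upper strict_mono_less)
    moreover have "\<alpha> = \<beta>"
      using fpot_double_zero_unique[OF n_ge_2 b_nonzero d_nonzero \<alpha>(1) \<beta>(1) \<alpha>(2,3) \<beta>(2,3)] .
    ultimately show False
      by simp
  qed
  then have "range g = {\<alpha><..}"
    unfolding \<alpha>_def by (rule range_strict_mono_unbounded[OF continuous_on_g smono bdd_below])
  then show ?thesis
    unfolding type2_def using \<alpha>(1) strict_mono_imp_inj_on[OF smono] by blast
qed

lemma type2_if_no_critical_point:
  assumes "\<And>x. g' x \<noteq> 0"
  shows "type2 g"
proof -
  have "continuous_on UNIV g'"
    using deriv2 by (auto intro!: continuous_at_imp_continuous_on DERIV_isCont)
  then have "(\<forall>x\<in>UNIV. g' x > 0) \<or> (\<forall>x\<in>UNIV. g' x < 0)"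
    using assms by (intro continuous_on_nonzero_sign) auto
  then show ?thesis
  proof
    assume neg: "\<forall>x\<in>UNIV. g' x < 0"
    have "type2 (\<lambda>x. g (0 - x))"
      by (rule fpot_solution.type2_if_deriv_pos[OF mirror]) (use neg in simp)
    then have "type2 (\<lambda>x. g (- x))"
      by simp
    then show ?thesis
      by (rule type2_if_type2_mirror)
  qed (simp add: type2_if_deriv_pos)
qed

lemma type1_if_two_critical_points:
  assumes "x0 < x1" "g' x0 = 0" "g' x1 = 0" and nonconst: "\<not> (\<exists>c. \<forall>x. g x = c)"
  shows "type1 g"
proof (rule type1_if_periodic[OF continuous_on_g _ _ pos nonconst])
  show "2 * (x1 - x0) > 0"
    using assms(1) by simp
  fix x
  have "g (x + 2 * (x1 - x0)) = g (2 * x1 - (2 * x0 - x))"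
    by (simp add: algebra_simps)
  also have "\<dots> = g (2 * x0 - x)"
    by (rule symmetric_about_critical_point[OF assms(3)])
  also have "\<dots> = g x"
    by (rule symmetric_about_critical_point[OF assms(2)])
  finally show "g (x + 2 * (x1 - x0)) = g x" .
qed

lemma type3_or_type4_or_type5_if_unique_critical_point:
  assumes "g' x0 = 0" "\<And>x. g' x = 0 \<Longrightarrow> x = x0"
  shows "type3 g \<or> type4 g \<or> type5 g"
proof -
  note sym = symmetric_about_critical_point[OF assms(1)]
  have "continuous_on {x0<..} g'"
    using deriv2 by (auto intro!: continuous_at_imp_continuous_on DERIV_isCont)
  then have "(\<forall>x\<in>{x0<..}. g' x > 0) \<or> (\<forall>x\<in>{x0<..}. g' x < 0)"
    using assms(2) by (intro continuous_on_nonzero_sign) auto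
  then show ?thesis
  proof
    assume "\<forall>x\<in>{x0<..}. g' x > 0"
    then have "strict_mono_on {x0..} g"
      by (intro strict_mono_on_atLeast_if_deriv_pos[OF deriv]) simp
    then show ?thesis
      using type3_or_type4_if_symmetric_strict_mono[OF continuous_on_g sym] by blast
  next
    assume "\<forall>x\<in>{x0<..}. g' x < 0"
    then have "strict_mono_on {x0..} (\<lambda>x. - g x)"
      by (intro strict_mono_on_atLeast_if_deriv_pos[OF DERIV_minus[OF deriv]]) simp
    moreover have "continuous_on UNIV (\<lambda>x. - g x)"
      using continuous_on_g by (rule continuous_on_minus)
    ultimately have "type3 (\<lambda>x. - g x) \<or> type4 (\<lambda>x. - g x)"
      using type3_or_type4_if_symmetric_strict_mono[of "\<lambda>x. - g x" x0] sym by simp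
    moreover have "\<not> type3 (\<lambda>x. - g x)"
    proof
      assume "type3 (\<lambda>x. - g x)"
      then obtain v1 where "range (\<lambda>x. - g x) = {v1..}"
        unfolding type3_def by blast
      then have "max v1 0 \<in> range (\<lambda>x. - g x)"
        by simp
      then obtain x where "- g x = max v1 0"
        by (auto simp del: max_def)
      with pos[of x] show False
        by (simp add: max_def split: if_splits)
    qed
    ultimately show ?thesis
      using type5_if_type4_uminus by blast
  qed
qed

end

theorem mainTheorem8:
  fixes n :: nat and a b d C H :: real and g g' g'' :: "real \<Rightarrow> real"
  assumes "n \<ge> 2"
    and "a \<in> {-1, 0, 1}" and "b \<in> {-1, 1}" and "d \<in> {-1, 1}"
    and "\<forall>x. g x > 0"
    and "\<not> (\<exists>c. \<forall>x. g x = c)"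
    and "smooth_fun g"
    and "\<forall>x. (g has_real_derivative g' x) (at x)"
    and "\<forall>x. (g' has_real_derivative g'' x) (at x)"
    and "\<forall>x. (g' x)^2 = fpot n a b d C H (g x)"
    and "\<forall>x. (fpot n a b d C H has_real_derivative (2 * g'' x)) (at (g x))"
  shows "type1 g \<or> type2 g \<or> type3 g \<or> type4 g \<or> type5 g"
proof -
  have "2 * g'' x = dfpot n a b d H (g x)" for x
    using DERIV_unique[OF assms(11)[rule_format] has_real_derivative_fpot] assms(5) by (metis less_irrefl)
  then have "(g' has_real_derivative dfpot n a b d H (g x) / 2) (at x)" for x
    using assms(9) by (metis nonzero_mult_div_cancel_left zero_neq_numeral)
  moreover have "b \<noteq> 0" "d \<noteq> 0"
    using assms(3,4) by auto
  ultimately interpret fpot_solution n a b d C H g g'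
    using assms(1,5,8,10) by unfold_locales auto
  consider "\<forall>x. g' x \<noteq> 0"
    | x0 x1 where "x0 < x1" "g' x0 = 0" "g' x1 = 0"
    | x0 where "g' x0 = 0" "\<And>x. g' x = 0 \<Longrightarrow> x = x0"
    by (metis linorder_neqE_linordered_idom)
  then show ?thesis
    using type2_if_no_critical_point type1_if_two_critical_points[OF _ _ _ assms(6)]
      type3_or_type4_or_type5_if_unique_critical_point by cases blast+
qed

end
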